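(* Fix any total budget $\mathrm{TB}\in\mathbb N_0$ and let $k\in\mathbb N$. Then the disjunctive sum $1/2^k+\overline{1/2^k}=0$.
   Context: Game forms are defined recursively: $G=\{G^{\mathcal L}\mid G^{\mathcal R}\}$ with finite sets of Left and Right options, and finite birthday. $0=\{\varnothing\mid\varnothing\}$, $1=\{0\mid\varnothing\}$. Dyadic game forms: $1/2^0=1$ and for $k\in\mathbb N$, $1/2^k=\{0\mid 1/2^{k-1}\}$. The conjugate is $\bar G=\{\overline{G^{\mathcal R}}\mid\overline{G^{\mathcal L}}\}$. The budget set for total budget $\mathrm{TB}$ is $\mathcal B=\{0,\dots,\mathrm{TB},\hat 0,\dots,\widehat{\mathrm{TB}}\}$: state $p$ (resp. $\hat p$) means Left holds $p$ dollars and Right holds $\mathrm{TB}-p$, and Right (resp. Left) holds the tie-breaking marker. Play of $(G,\tilde p)$: at every position (terminal ones included) both players bid simultaneously, Left $\ell\in\{0,\dots,p\}$, Right $r\in\{0,\dots,\mathrm{TB}-p\}$. If Left holds the marker (state $\hat p$): if $\ell>r$ Left moves to $(G^L,\widehat{p-\ell})$, or, including the marker (allowed when $\ell\ge r$), to $(G^L,p-\ell)$; if $\ell=r$ Left wins, the marker passes to Right, play continues at $(G^L,p-\ell)$; if $\ell<r$ Right moves to $(G^R,\widehat{p+r})$. Symmetrically when Right holds the marker (state $p$): if $r>\ell$ Right moves to $(G^R,p+r)$ or, including the marker, to $(G^R,\widehat{p+r})$; if $r=\ell$ Right wins, the marker passes to Left, play continues at $(G^R,\widehat{p+r})$; if $r<\ell$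 Left moves to $(G^L,p-\ell)$. A player who wins a bid but has no option loses. $o(G,\tilde p)\in\{\mathrm L,\mathrm R\}$ is the winner under optimal play; $\mathrm L>\mathrm R$. Disjunctive sum $G+H=\{G^{\mathcal L}+H,G+H^{\mathcal L}\mid G^{\mathcal R}+H,G+H^{\mathcal R}\}$. $G\ge H$ means $o(G+X,\tilde p)\ge o(H+X,\tilde p)$ for all game forms $X$ and all $\tilde p\in\mathcal B$; $G=H$ means $G\ge H$ and $H\ge G$. *)

theory Defs
  imports Main "HOL-Library.FSet"
begin

datatype game = Game (lopts: "game fset") (ropts: "game fset")

definition g_zero :: game where "g_zero = Game {||} {||}"
definition g_one :: game where "g_one = Game {|g_zero|} {||}"

text \<open>Dyadic game forms: dyadic k = 1/2^k.\<close>
primrec dyadic :: "nat \<Rightarrow> game" where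
  "dyadic 0 = g_one"
| "dyadic (Suc k) = Game {|g_zero|} {|dyadic k|}"

primrec conjugate :: "game \<Rightarrow> game" where
  "conjugate (Game GL GR) = Game (conjugate |`| GR) (conjugate |`| GL)"

lemma game_size_lopt: "g |\<in>| GL \<Longrightarrow> size g < size (Game GL GR)"
  by (induction GL) (auto simp: size_fset_overloaded_simps)

lemma game_size_ropt: "g |\<in>| GR \<Longrightarrow> size g < size (Game GL GR)"
  by (induction GR) (auto simp: size_fset_overloaded_simps)

declare fimage_cong[fundef_cong]

function gsum :: "game \<Rightarrow> game \<Rightarrow> game" where
  "gsum (Game GL GR) (Game HL HR) =
     Game ((\<lambda>g. gsum g (Game HL HR)) |`| GL |\<union>| (\<lambda>h. gsum (Game GL GR) h) |`| HL)
          ((\<lambda>g. gsum g (Game HL HR)) |`| GR |\<union>| (\<lambda>h. gsum (Game GL GR) h) |`| HR)"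
  by pat_completeness auto
termination
  by (relation "measure (\<lambda>(g, h). size g + size h)")
     (auto dest: game_size_lopt game_size_ropt)

text \<open>Budget states: \<open>Plain p\<close> is the state p (Left holds p dollars, Right holds TB - p,
  Right holds the tie-breaking marker); \<open>Hat p\<close> is the state p-hat (Left holds the marker).\<close>
datatype bstate = Plain nat | Hat nat

definition budget_set :: "nat \<Rightarrow> bstate set" where
  "budget_set TB = {Plain p | p. p \<le> TB} \<union> {Hat p | p. p \<le> TB}"

fun money :: "bstate \<Rightarrow> nat" where
  "money (Plain p) = p"
| "money (Hat p) = p"

fun left_wins_bid :: "bstate \<Rightarrow> nat \<Rightarrow> nat \<Rightarrow> bool" where
  "left_wins_bid (Hat p) l r = (r \<le> l)"
| "left_wins_bid (Plain p) l r = (r < l)"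

fun left_targets :: "bstate \<Rightarrow> nat \<Rightarrow> nat \<Rightarrow> bstate set" where
  "left_targets (Hat p) l r = (if r < l then {Hat (p - l), Plain (p - l)} else {Plain (p - l)})"
| "left_targets (Plain p) l r = {Plain (p - l)}"

fun right_targets :: "bstate \<Rightarrow> nat \<Rightarrow> nat \<Rightarrow> bstate set" where
  "right_targets (Hat p) l r = {Hat (p + r)}"
| "right_targets (Plain p) l r = (if l < r then {Plain (p + r), Hat (p + r)} else {Hat (p + r)})"

inductive lwin :: "nat \<Rightarrow> game \<Rightarrow> bstate \<Rightarrow> bool" for TB :: nat where
  "\<lbrakk> l \<le> money s;
     \<forall>r. r \<le> TB - money s \<longrightarrow>
        (left_wins_bid s l r \<longrightarrow> (\<exists>g\<in>fset GL. \<exists>s'\<in>left_targets s l r. lwin TB g s')) \<and>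
        (\<not> left_wins_bid s l r \<longrightarrow> (\<forall>g\<in>fset GR. \<forall>s'\<in>right_targets s l r. lwin TB g s')) \<rbrakk>
   \<Longrightarrow> lwin TB (Game GL GR) s"

datatype outcome = OR | OL

definition outcome :: "nat \<Rightarrow> game \<Rightarrow> bstate \<Rightarrow> outcome" where
  "outcome TB G s = (if lwin TB G s then OL else OR)"

definition outcome_ge :: "outcome \<Rightarrow> outcome \<Rightarrow> bool" where
  "outcome_ge a b \<longleftrightarrow> (a = b \<or> (a = OL \<and> b = OR))"

definition game_ge :: "nat \<Rightarrow> game \<Rightarrow> game \<Rightarrow> bool" where
  "game_ge TB G H \<longleftrightarrow>
     (\<forall>X. \<forall>s\<in>budget_set TB. outcome_ge (outcome TB (gsum G X) s) (outcome TB (gsum H X) s))"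

definition game_eq :: "nat \<Rightarrow> game \<Rightarrow> game \<Rightarrow> bool" where
  "game_eq TB G H \<longleftrightarrow> game_ge TB G H \<and> game_ge TB H G"

end

theory Submission
  imports Defs
begin

(* Call H nonnegative if H + X is a Left win from every budget state from which X is, and
   strongly nonnegative if H + X is even a Left win from every state at least as good for
   Left.  Left proves H + X >= X by following her winning strategy in X.  If every Right
   option of H is strongly nonnegative, a Right move in H only pays Left, so H is
   nonnegative.  If moreover some Left option of H is nonnegative, it lets Left cope with a
   tie that she wins only because her state is better, so H is strongly nonnegative.
   Hence 1/2^j is strongly nonnegative and, by induction on j + k, so is
   1/2^j + conj(1/2^k) for j < k, while 1/2^k + conj(1/2^k) is nonnegative.
   The dual argument shows that it is also nonpositive. *)

lemma game_option_induct [case_names options]: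
  assumes "\<And>X. (\<And>g. g |\<in>| lopts X \<Longrightarrow> P g) \<Longrightarrow> (\<And>g. g |\<in>| ropts X \<Longrightarrow> P g) \<Longrightarrow> P X"
  shows "P X"
proof (induction X)
  case (Game GL GR)
  then show ?case using assms[of "Game GL GR"] by simp
qed

lemma lopts_gsum: "lopts (gsum G H) = (\<lambda>g. gsum g H) |`| lopts G |\<union>| gsum G |`| lopts H"
  by (cases G; cases H) simp

lemma ropts_gsum: "ropts (gsum G H) = (\<lambda>g. gsum g H) |`| ropts G |\<union>| gsum G |`| ropts H"
  by (cases G; cases H) simp

lemma gsum_in_lopts_gsum:
  "h |\<in>| lopts H \<Longrightarrow> gsum h G |\<in>| lopts (gsum H G)"
  "x |\<in>| lopts G \<Longrightarrow> gsum H x |\<in>| lopts (gsum H G)"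
  by (simp_all add: lopts_gsum)

lemma gsum_in_ropts_gsum:
  "h |\<in>| ropts H \<Longrightarrow> gsum h G |\<in>| ropts (gsum H G)"
  "x |\<in>| ropts G \<Longrightarrow> gsum H x |\<in>| ropts (gsum H G)"
  by (simp_all add: ropts_gsum)

lemma gsum_zero_left: "gsum g_zero H = H"
  by (induction H) (simp add: g_zero_def fset.map_ident_strong)

lemma gsum_zero_right: "gsum H g_zero = H"
  by (induction H) (simp add: g_zero_def fset.map_ident_strong)

lemma lopts_conjugate: "lopts (conjugate G) = conjugate |`| ropts G"
  by (cases G) simp

lemma ropts_conjugate: "ropts (conjugate G) = conjugate |`| lopts G"
  by (cases G) simp

lemma conjugate_zero [simp]: "conjugate g_zero = g_zero"
  by (simp add: g_zero_def)

lemma lopts_dyadic [simp]: "lopts (dyadic k) = {|g_zero|}"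
  by (cases k) (simp_all add: g_one_def)

lemma ropts_dyadic [simp]:
  "ropts (dyadic 0) = {||}" "ropts (dyadic (Suc k)) = {|dyadic k|}"
  by (simp_all add: g_one_def)

declare dyadic.simps [simp del]

lemma lwinI:
  assumes "l \<le> money s"
    and "\<And>r. r \<le> TB - money s \<Longrightarrow> left_wins_bid s l r \<Longrightarrow>
           \<exists>g|\<in>|lopts G. \<exists>s'\<in>left_targets s l r. lwin TB g s'"
    and "\<And>r g s'. r \<le> TB - money s \<Longrightarrow> \<not> left_wins_bid s l r \<Longrightarrow>
           g |\<in>| ropts G \<Longrightarrow> s' \<in> right_targets s l r \<Longrightarrow> lwin TB g s'"
  shows "lwin TB G s"
  using assms by (cases G) (auto intro!: lwin.intros)

lemma lwinE:
  assumes "lwin TB G s"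
  obtains l where "l \<le> money s"
    and "\<forall>r\<le>TB - money s. left_wins_bid s l r \<longrightarrow>
           (\<exists>g|\<in>|lopts G. \<exists>s'\<in>left_targets s l r. lwin TB g s')"
    and "\<forall>r\<le>TB - money s. \<not> left_wins_bid s l r \<longrightarrow>
           (\<forall>g|\<in>|ropts G. \<forall>s'\<in>right_targets s l r. lwin TB g s')"
  using assms by (cases rule: lwin.cases) auto

lemma not_lwinE:
  assumes "\<not> lwin TB G s" and "l \<le> money s"
  obtains (bid_to_left) r where "r \<le> TB - money s" and "left_wins_bid s l r"
      and "\<forall>g|\<in>|lopts G. \<forall>s'\<in>left_targets s l r. \<not> lwin TB g s'"
    | (bid_to_right) r g s' where "r \<le> TB - money s" and "\<not> left_wins_bid s l r"
      and "g |\<in>| ropts G" and "s' \<in> right_targets s l r" and "\<not> lwin TB g s'"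
  using assms lwinI[of l s TB G] by blast

(* Winning a tie forces Left to move, so holding the marker is not obviously an asset:
   lwin is only shown to be monotone along same_marker_le. *)
fun bstate_le :: "bstate \<Rightarrow> bstate \<Rightarrow> bool" where
  "bstate_le (Plain p) (Plain q) \<longleftrightarrow> p \<le> q"
| "bstate_le (Plain p) (Hat q) \<longleftrightarrow> p \<le> q"
| "bstate_le (Hat p) (Hat q) \<longleftrightarrow> p \<le> q"
| "bstate_le (Hat p) (Plain q) \<longleftrightarrow> False"

fun same_marker_le :: "bstate \<Rightarrow> bstate \<Rightarrow> bool" where
  "same_marker_le (Plain p) (Plain q) \<longleftrightarrow> p \<le> q"
| "same_marker_le (Hat p) (Hat q) \<longleftrightarrow> p \<le> q"
| "same_marker_le _ _ \<longleftrightarrow> False"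

lemma bstate_le_refl [simp]: "bstate_le s s"
  by (cases s) auto

lemma same_marker_le_imp_bstate_le: "same_marker_le s t \<Longrightarrow> bstate_le s t"
  by (cases s; cases t) auto

lemma bstate_le_trans: "bstate_le s t \<Longrightarrow> bstate_le t u \<Longrightarrow> bstate_le s u"
  by (cases s; cases t; cases u) auto

lemma bstate_le_money: "bstate_le s t \<Longrightarrow> money s \<le> money t"
  by (cases s; cases t) auto

lemma left_wins_bid_mono: "bstate_le s t \<Longrightarrow> left_wins_bid s l r \<Longrightarrow> left_wins_bid t l r"
  by (cases s; cases t) auto

lemma left_wins_bid_same_marker:
  "same_marker_le s t \<Longrightarrow> left_wins_bid t l r \<longleftrightarrow> left_wins_bid s l r"
  by (cases s; cases t) auto

lemma left_targets_same_marker: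
  "same_marker_le s t \<Longrightarrow> s' \<in> left_targets s l r \<Longrightarrow> \<exists>t'\<in>left_targets t l r. same_marker_le s' t'"
  by (cases s; cases t) (auto split: if_splits)

lemma right_targets_same_marker:
  "same_marker_le s t \<Longrightarrow> t' \<in> right_targets t l r \<Longrightarrow> \<exists>s'\<in>right_targets s l r. same_marker_le s' t'"
  by (cases s; cases t) (auto split: if_splits)

lemma left_targets_mono:
  "bstate_le s t \<Longrightarrow> left_wins_bid s l r \<Longrightarrow> s' \<in> left_targets s l r \<Longrightarrow>
   \<exists>t'\<in>left_targets t l r. bstate_le s' t'"
  by (cases s; cases t) (auto split: if_splits)

lemma right_targets_mono:
  "bstate_le s t \<Longrightarrow> \<not> left_wins_bid t l r \<Longrightarrow> t' \<in> right_targets t l r \<Longrightarrow>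
   \<exists>s'\<in>right_targets s l r. bstate_le s' t'"
  by (cases s; cases t) (auto split: if_splits)

lemma bstate_le_left_target: "s' \<in> left_targets s l r \<Longrightarrow> bstate_le s' s"
  by (cases s) (auto split: if_splits)

lemma bstate_le_right_target: "s' \<in> right_targets s l r \<Longrightarrow> bstate_le s s'"
  by (cases s) (auto split: if_splits)

lemma bstate_le_tieE:
  assumes "bstate_le s t" "left_wins_bid t l r" "\<not> left_wins_bid s l r"
  obtains p q where "s = Plain p" "t = Hat q" "r = l" "p \<le> q"
  using assms by (cases s; cases t) auto

lemma lwin_same_marker_mono: "lwin TB X s \<Longrightarrow> same_marker_le s t \<Longrightarrow> lwin TB X t"
proof (induction X arbitrary: s t rule: game_option_induct)
  case (options G)
  obtain l where "l \<le> money s"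
    and left: "\<forall>r\<le>TB - money s. left_wins_bid s l r \<longrightarrow>
                 (\<exists>g|\<in>|lopts G. \<exists>s'\<in>left_targets s l r. lwin TB g s')"
    and right: "\<forall>r\<le>TB - money s. \<not> left_wins_bid s l r \<longrightarrow>
                 (\<forall>g|\<in>|ropts G. \<forall>s'\<in>right_targets s l r. lwin TB g s')"
    using options.prems(1) by (rule lwinE)
  have money: "money s \<le> money t"
    using options.prems(2) by (intro bstate_le_money same_marker_le_imp_bstate_le)
  have same_bid: "left_wins_bid t l r \<longleftrightarrow> left_wins_bid s l r" for r
    using options.prems(2) by (rule left_wins_bid_same_marker)
  show ?case
  proof (rule lwinI)
    show "l \<le> money t" using \<open>l \<le> money s\<close> money by simp
  next
    fix r assume "r \<le> TB - money t" "left_wins_bid t l r"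
    then obtain g s' where "g |\<in>| lopts G" "s' \<in> left_targets s l r" "lwin TB g s'"
      using left money same_bid by (meson diff_le_mono2 order_trans)
    moreover obtain t' where "t' \<in> left_targets t l r" "same_marker_le s' t'"
      using left_targets_same_marker[OF options.prems(2) \<open>s' \<in> left_targets s l r\<close>] by blast
    ultimately show "\<exists>g|\<in>|lopts G. \<exists>t'\<in>left_targets t l r. lwin TB g t'"
      using options.IH(1) by blast
  next
    fix r g t' assume "r \<le> TB - money t" "\<not> left_wins_bid t l r"
      and "g |\<in>| ropts G" "t' \<in> right_targets t l r"
    moreover obtain s' where "s' \<in> right_targets s l r" "same_marker_le s' t'"
      using right_targets_same_marker[OF options.prems(2) \<open>t' \<in> right_targets t l r\<close>] by blast
    ultimately show "lwin TB g t'"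
      using right money same_bid options.IH(2) by (meson diff_le_mono2 order_trans)
  qed
qed

definition nonneg :: "nat \<Rightarrow> game \<Rightarrow> bool" where
  "nonneg TB H \<longleftrightarrow> (\<forall>X s. lwin TB X s \<longrightarrow> lwin TB (gsum H X) s)"

definition nonpos :: "nat \<Rightarrow> game \<Rightarrow> bool" where
  "nonpos TB H \<longleftrightarrow> (\<forall>X s. lwin TB (gsum H X) s \<longrightarrow> lwin TB X s)"

(* A Right move in H pays Left and may hand her the marker, so the other component continues
   from a state that is better for Left, but not in the sense of same_marker_le. *)
definition strongly_nonneg :: "nat \<Rightarrow> game \<Rightarrow> bool" where
  "strongly_nonneg TB H \<longleftrightarrow>
     (\<forall>X s t. lwin TB X s \<longrightarrow> bstate_le s t \<longrightarrow> lwin TB (gsum H X) t)"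

definition strongly_nonpos :: "nat \<Rightarrow> game \<Rightarrow> bool" where
  "strongly_nonpos TB H \<longleftrightarrow>
     (\<forall>X s t. lwin TB (gsum H X) s \<longrightarrow> bstate_le s t \<longrightarrow> lwin TB X t)"

lemma strongly_nonneg_imp_nonneg: "strongly_nonneg TB H \<Longrightarrow> nonneg TB H"
  unfolding strongly_nonneg_def nonneg_def by auto

lemma strongly_nonpos_imp_nonpos: "strongly_nonpos TB H \<Longrightarrow> nonpos TB H"
  unfolding strongly_nonpos_def nonpos_def by auto

lemma nonneg_zero: "nonneg TB g_zero"
  by (simp add: nonneg_def gsum_zero_left)

lemma nonpos_zero: "nonpos TB g_zero"
  by (simp add: nonpos_def gsum_zero_left)

lemma game_ge_zero_if_nonneg: "nonneg TB H \<Longrightarrow> game_ge TB H g_zero"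
  by (simp add: game_ge_def nonneg_def outcome_def outcome_ge_def gsum_zero_left)

lemma zero_game_ge_if_nonpos: "nonpos TB H \<Longrightarrow> game_ge TB g_zero H"
  by (simp add: game_ge_def nonpos_def outcome_def outcome_ge_def gsum_zero_left)

lemma nonneg_if_ropts_strongly_nonneg:
  assumes ropts: "\<And>h. h |\<in>| ropts H \<Longrightarrow> strongly_nonneg TB h"
  shows "nonneg TB H"
  unfolding nonneg_def
proof (intro allI impI)
  fix X s
  show "lwin TB X s \<Longrightarrow> lwin TB (gsum H X) s"
  proof (induction X arbitrary: s rule: game_option_induct)
    case (options G)
    obtain l where "l \<le> money s"
      and left: "\<forall>r\<le>TB - money s. left_wins_bid s l r \<longrightarrow>
                   (\<exists>g|\<in>|lopts G. \<exists>s'\<in>left_targets s l r. lwin TB g s')"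
      and right: "\<forall>r\<le>TB - money s. \<not> left_wins_bid s l r \<longrightarrow>
                   (\<forall>g|\<in>|ropts G. \<forall>s'\<in>right_targets s l r. lwin TB g s')"
      using options.prems by (rule lwinE)
    show ?case
    proof (rule lwinI)
      show "l \<le> money s" by fact
    next
      fix r assume "r \<le> TB - money s" "left_wins_bid s l r"
      then obtain g s' where "g |\<in>| lopts G" "s' \<in> left_targets s l r" "lwin TB g s'"
        using left by blast
      then show "\<exists>g|\<in>|lopts (gsum H G). \<exists>s'\<in>left_targets s l r. lwin TB g s'"
        using options.IH(1) by (auto simp: lopts_gsum)
    next
      fix r g s' assume "r \<le> TB - money s" "\<not> left_wins_bid s l r"
        and "g |\<in>| ropts (gsum H G)" "s' \<in> right_targets s l r"
      then consider (move_in_H) h where "h |\<in>| ropts H" "g = gsum h G"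
        | (move_in_G) x where "x |\<in>| ropts G" "g = gsum H x" "lwin TB x s'"
        using right by (auto simp: ropts_gsum)
      then show "lwin TB g s'"
      proof cases
        case move_in_H
        moreover have "bstate_le s s'"
          using \<open>s' \<in> right_targets s l r\<close> by (rule bstate_le_right_target)
        ultimately show ?thesis
          using ropts options.prems unfolding strongly_nonneg_def by blast
      next
        case move_in_G
        then show ?thesis using options.IH(2) by blast
      qed
    qed
  qed
qed

lemma nonpos_if_lopts_strongly_nonpos:
  assumes lopts: "\<And>h. h |\<in>| lopts H \<Longrightarrow> strongly_nonpos TB h"
  shows "nonpos TB H"
  unfolding nonpos_def
proof (intro allI impI)
  fix X s
  show "lwin TB (gsum H X) s \<Longrightarrow> lwin TB X s"
  proof (induction X arbitrary: s rule: game_option_induct)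
    case (options G)
    obtain l where "l \<le> money s"
      and left: "\<forall>r\<le>TB - money s. left_wins_bid s l r \<longrightarrow>
                   (\<exists>g|\<in>|lopts (gsum H G). \<exists>s'\<in>left_targets s l r. lwin TB g s')"
      and right: "\<forall>r\<le>TB - money s. \<not> left_wins_bid s l r \<longrightarrow>
                   (\<forall>g|\<in>|ropts (gsum H G). \<forall>s'\<in>right_targets s l r. lwin TB g s')"
      using options.prems by (rule lwinE)
    show ?case
    proof (rule ccontr)
      assume lost: "\<not> lwin TB G s"
      from lost \<open>l \<le> money s\<close> show False
      proof (cases rule: not_lwinE)
        case (bid_to_left r)
        then obtain g s' where "g |\<in>| lopts (gsum H G)" "s' \<in> left_targets s l r" "lwin TB g s'"
          using left by blast
        then consider (move_in_H) h where "h |\<in>| lopts H" "lwin TB (gsum h G) s'" "bstate_le s' s"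
          | (move_in_G) x where "x |\<in>| lopts G" "lwin TB (gsum H x) s'"
          using bstate_le_left_target by (auto simp: lopts_gsum)
        then show False
        proof cases
          case move_in_H
          then show False using lopts lost unfolding strongly_nonpos_def by blast
        next
          case move_in_G
          then show False using bid_to_left options.IH(1) \<open>s' \<in> left_targets s l r\<close> by blast
        qed
      next
        case (bid_to_right r x s')
        then have "lwin TB (gsum H x) s'" using right by (auto simp: ropts_gsum)
        then show False using bid_to_right options.IH(2) by blast
      qed
    qed
  qed
qed

(* A bid that Left wins at t but loses at s is a tie won with the marker; if l > 0, her
   strategy at s answers the bid l - 1 with the same payment. *)
lemma simulate_left_move:
  assumes "bstate_le s t" and "r \<le> TB - money t" and "left_wins_bid t l r"
    and left: "\<forall>r\<le>TB - money s. left_wins_bid s l r \<longrightarrow>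
                 (\<exists>g|\<in>|lopts G. \<exists>s'\<in>left_targets s l r. lwin TB g s')"
  obtains (move) g s' t' where "g |\<in>| lopts G" "lwin TB g s'"
      "t' \<in> left_targets t l r" "bstate_le s' t'"
    | (tie) p q where "s = Plain p" "t = Hat q" "l = 0" "r = 0" "p \<le> q"
proof (cases "left_wins_bid s l r")
  case True
  have "r \<le> TB - money s"
    using assms(2) bstate_le_money[OF assms(1)] by arith
  then obtain g s' where "g |\<in>| lopts G" "s' \<in> left_targets s l r" "lwin TB g s'"
    using left True by blast
  with left_targets_mono[OF assms(1) True] show ?thesis
    using move by blast
next
  case False
  with assms(1,3) obtain p q where tie: "s = Plain p" "t = Hat q" "r = l" "p \<le> q"
    by (rule bstate_le_tieE)
  show ?thesis
  proof (cases "l = 0")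
    case True
    then show ?thesis using tie that(2) by blast
  next
    case False
    have "l - 1 \<le> TB - money s" using assms(2) tie by simp
    then obtain g where "g |\<in>| lopts G" "lwin TB g (Plain (p - l))"
      using left False tie by auto
    moreover have "Plain (q - l) \<in> left_targets t l r" "bstate_le (Plain (p - l)) (Plain (q - l))"
      using tie by auto
    ultimately show ?thesis using move by blast
  qed
qed

lemma simulate_right_move:
  assumes "bstate_le s t" and "r \<le> TB - money t" and "\<not> left_wins_bid t l r"
    and "t' \<in> right_targets t l r"
    and right: "\<forall>r\<le>TB - money s. \<not> left_wins_bid s l r \<longrightarrow>
                  (\<forall>g|\<in>|ropts G. \<forall>s'\<in>right_targets s l r. lwin TB g s')"
  obtains s' where "bstate_le s' t'" and "\<forall>g|\<in>|ropts G. lwin TB g s'"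
proof -
  obtain s' where "s' \<in> right_targets s l r" "bstate_le s' t'"
    using right_targets_mono[OF assms(1,3,4)] by blast
  moreover have "\<not> left_wins_bid s l r"
    using assms(3) left_wins_bid_mono[OF assms(1)] by blast
  moreover have "r \<le> TB - money s"
    using assms(2) bstate_le_money[OF assms(1)] by arith
  ultimately show ?thesis using right that by blast
qed

lemma strongly_nonneg_if_nonneg_lopt:
  assumes "h\<^sub>0 |\<in>| lopts H" "nonneg TB h\<^sub>0"
    and ropts: "\<And>h. h |\<in>| ropts H \<Longrightarrow> strongly_nonneg TB h"
  shows "strongly_nonneg TB H"
  unfolding strongly_nonneg_def
proof (intro allI impI)
  fix X s t
  show "lwin TB X s \<Longrightarrow> bstate_le s t \<Longrightarrow> lwin TB (gsum H X) t"
  proof (induction X arbitrary: s t rule: game_option_induct)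
    case (options G)
    obtain l where "l \<le> money s"
      and left: "\<forall>r\<le>TB - money s. left_wins_bid s l r \<longrightarrow>
                   (\<exists>g|\<in>|lopts G. \<exists>s'\<in>left_targets s l r. lwin TB g s')"
      and right: "\<forall>r\<le>TB - money s. \<not> left_wins_bid s l r \<longrightarrow>
                   (\<forall>g|\<in>|ropts G. \<forall>s'\<in>right_targets s l r. lwin TB g s')"
      using options.prems(1) by (rule lwinE)
    show ?case
    proof (rule lwinI)
      show "l \<le> money t"
        using \<open>l \<le> money s\<close> bstate_le_money[OF options.prems(2)] by simp
    next
      fix r assume r: "r \<le> TB - money t" and won: "left_wins_bid t l r"
      from options.prems(2) r won left
      show "\<exists>g|\<in>|lopts (gsum H G). \<exists>t'\<in>left_targets t l r. lwin TB g t'"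
      proof (cases rule: simulate_left_move)
        case (move x s' t')
        then show ?thesis using options.IH(1) gsum_in_lopts_gsum(2) by blast
      next
        case (tie p q)
        have "lwin TB G (Plain q)"
          using options.prems(1) tie by (auto intro: lwin_same_marker_mono)
        then have "lwin TB (gsum h\<^sub>0 G) (Plain q)"
          using \<open>nonneg TB h\<^sub>0\<close> by (simp add: nonneg_def)
        moreover have "Plain q \<in> left_targets t l r" using tie by simp
        ultimately show ?thesis using \<open>h\<^sub>0 |\<in>| lopts H\<close> gsum_in_lopts_gsum(1) by blast
      qed
    next
      fix r g t' assume r: "r \<le> TB - money t" and lost: "\<not> left_wins_bid t l r"
        and "g |\<in>| ropts (gsum H G)" and t': "t' \<in> right_targets t l r"
      then consider (move_in_H) h where "h |\<in>| ropts H" "g = gsum h G"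
        | (move_in_G) x where "x |\<in>| ropts G" "g = gsum H x"
        by (auto simp: ropts_gsum)
      then show "lwin TB g t'"
      proof cases
        case move_in_H
        moreover have "bstate_le s t'"
          using options.prems(2) bstate_le_right_target[OF t'] by (rule bstate_le_trans)
        ultimately show ?thesis
          using ropts options.prems(1) unfolding strongly_nonneg_def by blast
      next
        case move_in_G
        from options.prems(2) r lost t' right obtain s' where
          "bstate_le s' t'" "\<forall>g|\<in>|ropts G. lwin TB g s'"
          by (rule simulate_right_move)
        then show ?thesis using move_in_G options.IH(2) by blast
      qed
    qed
  qed
qed

lemma strongly_nonpos_if_nonpos_ropt:
  assumes "h\<^sub>0 |\<in>| ropts H" "nonpos TB h\<^sub>0"
    and lopts: "\<And>h. h |\<in>| lopts H \<Longrightarrow> strongly_nonpos TB h"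
  shows "strongly_nonpos TB H"
  unfolding strongly_nonpos_def
proof (intro allI impI)
  fix X s t
  show "lwin TB (gsum H X) s \<Longrightarrow> bstate_le s t \<Longrightarrow> lwin TB X t"
  proof (induction X arbitrary: s t rule: game_option_induct)
    case (options G)
    obtain l where "l \<le> money s"
      and left: "\<forall>r\<le>TB - money s. left_wins_bid s l r \<longrightarrow>
                   (\<exists>g|\<in>|lopts (gsum H G). \<exists>s'\<in>left_targets s l r. lwin TB g s')"
      and right: "\<forall>r\<le>TB - money s. \<not> left_wins_bid s l r \<longrightarrow>
                   (\<forall>g|\<in>|ropts (gsum H G). \<forall>s'\<in>right_targets s l r. lwin TB g s')"
      using options.prems(1) by (rule lwinE)
    show ?case
    proof (rule ccontr)
      assume lost: "\<not> lwin TB G t"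
      have "l \<le> money t"
        using \<open>l \<le> money s\<close> bstate_le_money[OF options.prems(2)] by simp
      with lost show False
      proof (cases rule: not_lwinE)
        case (bid_to_left r)
        from options.prems(2) bid_to_left(1,2) left show False
        proof (cases rule: simulate_left_move)
          case (move g s' t')
          from \<open>g |\<in>| lopts (gsum H G)\<close> consider
            (move_in_H) h where "h |\<in>| lopts H" "g = gsum h G"
            | (move_in_G) x where "x |\<in>| lopts G" "g = gsum H x"
            by (auto simp: lopts_gsum)
          then show False
          proof cases
            case move_in_H
            have "bstate_le s' t"
              using move bstate_le_trans bstate_le_left_target by blast
            then show False using move_in_H move lopts lost unfolding strongly_nonpos_def by blast
          next
            case move_in_G
            then show False using move bid_to_left(3) options.IH(1) by blast
          qed
        next
          case (tie p q)
          have "Hat p \<in> right_targets s l r" "\<not> left_wins_bid s l r" "r \<le> TB - money s"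
            using tie by auto
          then have "lwin TB (gsum h\<^sub>0 G) (Hat p)"
            using right \<open>h\<^sub>0 |\<in>| ropts H\<close> gsum_in_ropts_gsum(1) by blast
          then have "lwin TB G (Hat p)"
            using \<open>nonpos TB h\<^sub>0\<close> by (simp add: nonpos_def)
          then show False using lost tie by (auto intro: lwin_same_marker_mono)
        qed
      next
        case (bid_to_right r x t')
        from options.prems(2) bid_to_right(1,2,4) right obtain s' where
          "bstate_le s' t'" "\<forall>g|\<in>|ropts (gsum H G). lwin TB g s'"
          by (rule simulate_right_move)
        then have "lwin TB (gsum H x) s'"
          using bid_to_right(3) gsum_in_ropts_gsum(2) by blast
        then show False using bid_to_right options.IH(2) \<open>bstate_le s' t'\<close> by blast
      qed
    qed
  qed
qed

lemma strongly_nonneg_dyadic: "strongly_nonneg TB (dyadic k)"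
  by (induction k) (auto intro: strongly_nonneg_if_nonneg_lopt[of g_zero] simp: nonneg_zero)

lemma strongly_nonpos_conjugate_dyadic: "strongly_nonpos TB (conjugate (dyadic k))"
  by (induction k)
    (auto intro: strongly_nonpos_if_nonpos_ropt[of g_zero]
      simp: lopts_conjugate ropts_conjugate nonpos_zero)

lemma dyadic_plus_conjugate_nonneg:
  "j \<le> k \<Longrightarrow> nonneg TB (gsum (dyadic j) (conjugate (dyadic k))) \<and>
     (j < k \<longrightarrow> strongly_nonneg TB (gsum (dyadic j) (conjugate (dyadic k))))"
proof (induction "j + k" arbitrary: j k rule: less_induct)
  case less
  have ropts_strongly_nonneg: "strongly_nonneg TB g"
    if "g |\<in>| ropts (gsum (dyadic j) (conjugate (dyadic k)))" for g
    using that less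
    by (cases j) (auto simp: ropts_gsum ropts_conjugate gsum_zero_right strongly_nonneg_dyadic)
  show ?case
  proof (cases "j < k")
    case True
    then obtain k' where k: "k = Suc k'" "j \<le> k'" by (cases k) auto
    then have "nonneg TB (gsum (dyadic j) (conjugate (dyadic k')))" using less by simp
    moreover have "gsum (dyadic j) (conjugate (dyadic k')) |\<in>|
        lopts (gsum (dyadic j) (conjugate (dyadic k)))"
      using k by (simp add: lopts_gsum lopts_conjugate)
    ultimately show ?thesis
      using strongly_nonneg_if_nonneg_lopt ropts_strongly_nonneg strongly_nonneg_imp_nonneg by blast
  next
    case False
    then show ?thesis using nonneg_if_ropts_strongly_nonneg ropts_strongly_nonneg by blast
  qed
qed

lemma dyadic_plus_conjugate_nonpos:
  "j \<le> k \<Longrightarrow> nonpos TB (gsum (dyadic k) (conjugate (dyadic j))) \<and>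
     (j < k \<longrightarrow> strongly_nonpos TB (gsum (dyadic k) (conjugate (dyadic j))))"
proof (induction "j + k" arbitrary: j k rule: less_induct)
  case less
  have lopts_strongly_nonpos: "strongly_nonpos TB g"
    if "g |\<in>| lopts (gsum (dyadic k) (conjugate (dyadic j)))" for g
    using that less
    by (cases j) (auto simp: lopts_gsum lopts_conjugate gsum_zero_left strongly_nonpos_conjugate_dyadic)
  show ?case
  proof (cases "j < k")
    case True
    then obtain k' where k: "k = Suc k'" "j \<le> k'" by (cases k) auto
    then have "nonpos TB (gsum (dyadic k') (conjugate (dyadic j)))" using less by simp
    moreover have "gsum (dyadic k') (conjugate (dyadic j)) |\<in>|
        ropts (gsum (dyadic k) (conjugate (dyadic j)))"
      using k by (simp add: ropts_gsum)
    ultimately show ?thesis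
      using strongly_nonpos_if_nonpos_ropt lopts_strongly_nonpos strongly_nonpos_imp_nonpos by blast
  next
    case False
    then show ?thesis using nonpos_if_lopts_strongly_nonpos lopts_strongly_nonpos by blast
  qed
qed

theorem mainTheorem17:
  fixes TB k :: nat
  assumes "k \<ge> 1"
  shows "game_eq TB (gsum (dyadic k) (conjugate (dyadic k))) g_zero"
  using dyadic_plus_conjugate_nonneg[of k k TB] dyadic_plus_conjugate_nonpos[of k k TB]
  by (simp add: game_eq_def game_ge_zero_if_nonneg zero_game_ge_if_nonpos)

end
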